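(* Let $*$ be a rank-one preserving product on $M_{n\times m}(\mathbb{C})$. Then $*$ is a generalized Schur product: there exist a unital associative complex algebra $\mathcal{A}$ of dimension $n$, a unital associative complex algebra $\mathcal{B}$ of dimension $m$, and linear bijections $v_{\mathcal{A}}:\mathcal{A}\to\mathbb{C}^n$, $v_{\mathcal{B}}:\mathcal{B}\to\mathbb{C}^m$ such that for all $a,c\in\mathcal{A}$ and $b,d\in\mathcal{B}$, $$ v_{\mathcal{A}}(a)v_{\mathcal{B}}(b)^* * v_{\mathcal{A}}(c)v_{\mathcal{B}}(d)^* = v_{\mathcal{A}}(ac)\,v_{\mathcal{B}}(bd)^*. $$ (In fact one may take $\mathcal{A}=\mathbb{C}^n$, $\mathcal{B}=\mathbb{C}^m$ with suitable products and $v_{\mathcal{A}},v_{\mathcal{B}}$ the identity maps.)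
   Context: A rank-one preserving product (ropp) on $M_{n\times m}(\mathbb{C})$ is an associative bilinear product $*$ on $M_{n\times m}(\mathbb{C})$ which has an identity element of rank one and such that the $*$-product of any two rank-one matrices has rank at most one. Given unital algebras $\mathcal{A}$ (dimension $n$), $\mathcal{B}$ (dimension $m$) and linear bijections $v_{\mathcal{A}}:\mathcal{A}\to\mathbb{C}^n$, $v_{\mathcal{B}}:\mathcal{B}\to\mathbb{C}^m$, the generalized Schur product is the unique bilinear product on $M_{n\times m}(\mathbb{C})$ satisfying $v_{\mathcal{A}}(a)v_{\mathcal{B}}(b)^* * v_{\mathcal{A}}(c)v_{\mathcal{B}}(d)^* = v_{\mathcal{A}}(ac)v_{\mathcal{B}}(bd)^*$; here $u^*$ is the conjugate transpose of a column vector $u$. *)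

theory Defs
  imports "HOL-Analysis.Analysis"
begin

text \<open>Matrices in M_{n x m}(C) are rendered as complex^'m^'n (n = CARD('n) rows,
m = CARD('m) columns). Scalar multiplication of a matrix:\<close>

definition mscale :: "complex \<Rightarrow> complex^'m^'n \<Rightarrow> complex^'m^'n" where
  "mscale c A = (\<chi> i j. c * A$i$j)"

definition mat_bilinear :: "(complex^'m^'n \<Rightarrow> complex^'m^'n \<Rightarrow> complex^'m^'n) \<Rightarrow> bool" where
  "mat_bilinear p \<longleftrightarrow>
     (\<forall>A B C. p (A + B) C = p A C + p B C) \<and>
     (\<forall>A B C. p A (B + C) = p A B + p A C) \<and>
     (\<forall>c A B. p (mscale c A) B = mscale c (p A B)) \<and>
     (\<forall>c A B. p A (mscale c B) = mscale c (p A B))"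

definition ropp :: "(complex^'m^'n \<Rightarrow> complex^'m^'n \<Rightarrow> complex^'m^'n) \<Rightarrow> bool" where
  "ropp p \<longleftrightarrow> mat_bilinear p \<and>
     (\<forall>A B C. p (p A B) C = p A (p B C)) \<and>
     (\<exists>E. rank E = 1 \<and> (\<forall>A. p E A = A \<and> p A E = A)) \<and>
     (\<forall>A B. rank A = 1 \<longrightarrow> rank B = 1 \<longrightarrow> rank (p A B) \<le> 1)"

definition unital_algebra :: "(complex^'k \<Rightarrow> complex^'k \<Rightarrow> complex^'k) \<Rightarrow> bool" where
  "unital_algebra q \<longleftrightarrow>
     (\<forall>x y z. q (x + y) z = q x z + q y z) \<and>
     (\<forall>x y z. q x (y + z) = q x y + q x z) \<and>
     (\<forall>(c::complex) x y. q (c *s x) y = c *s q x y) \<and>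
     (\<forall>(c::complex) x y. q x (c *s y) = c *s q x y) \<and>
     (\<forall>x y z. q (q x y) z = q x (q y z)) \<and>
     (\<exists>e. \<forall>x. q e x = x \<and> q x e = x)"

text \<open>The matrix u v^* (v^* the conjugate transpose of the column vector v).\<close>
definition outer :: "complex^'n \<Rightarrow> complex^'m \<Rightarrow> complex^'m^'n" where
  "outer u v = (\<chi> i j. u$i * cnj (v$j))"

end

theory Submission
  imports Defs
begin

text \<open>Write u w* for outer u w and let e f* be the rank-one unit of *. The 2x2 minors of a
  matrix of rank at most one vanish, so u w* + u' w'* has rank at most one only if u, u' or w, w'
  are proportional. Applied to the products of the perturbed matrices (a + e) f* and e (b + f)*,
  whose products with e f* are known, this forces a f* * e b* = a b* = e b* * a f*, and shows
  that products of two matrices x f* are again of this form, as are products of two matrices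
  e y*. These two facts define products on C^n and C^m, which inherit bilinearity, associativity
  and a unit from *, and associativity then gives
  a b* * c d* = (a f* * c f*) * (e b* * e d*) = ac (bd)*.\<close>

lemma outer_add_left: "outer (a + a') b = outer a b + outer a' b"
  unfolding outer_def by (simp add: vec_eq_iff algebra_simps)

lemma outer_add_right: "outer a (b + b') = outer a b + outer a b'"
  unfolding outer_def by (simp add: vec_eq_iff algebra_simps)

lemma outer_scale_left: "outer (c *s a) b = mscale c (outer a b)"
  unfolding outer_def mscale_def by (simp add: vec_eq_iff algebra_simps)

lemma outer_scale_right: "outer a (c *s b) = mscale (cnj c) (outer a b)"
  unfolding outer_def mscale_def by (simp add: vec_eq_iff algebra_simps)

lemma outer_eq_0_iff [simp]: "outer a b = 0 \<longleftrightarrow> a = 0 \<or> b = 0"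
  unfolding outer_def by (auto simp: vec_eq_iff)

lemma outer_cancel_left:
  assumes "outer x f = outer x' f" "f \<noteq> 0"
  shows "x = x'"
proof -
  obtain j where "f$j \<noteq> 0" using assms(2) by (auto simp: vec_eq_iff)
  then show ?thesis
    using assms(1) by (simp add: vec_eq_iff outer_def) (metis mult_cancel_right)
qed

lemma outer_cancel_right:
  assumes "outer e y = outer e y'" "e \<noteq> 0"
  shows "y = y'"
proof -
  obtain i where "e$i \<noteq> 0" using assms(2) by (auto simp: vec_eq_iff)
  then show ?thesis
    using assms(1) by (simp add: vec_eq_iff outer_def) (metis complex_cnj_cancel_iff mult_cancel_left)
qed

lemma outer_zero_left [simp]: "outer 0 b = 0"
  by simp

lemma outer_zero_right [simp]: "outer a 0 = 0"
  by simp

lemma rank_le_1_imp_outer: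
  fixes X :: "complex^'m^'n"
  assumes "rank X \<le> 1"
  obtains u w where "X = outer u w"
proof -
  obtain B where B: "B \<subseteq> rows X" "vec.independent B" "rows X \<subseteq> vec.span B"
    "card B = vec.dim (rows X)"
    using vec.basis_exists by blast
  have row_in_span: "row i X \<in> vec.span B" for i
    using B(3) unfolding rows_def by blast
  have "card B \<le> 1"
    using B(4) assms unfolding row_rank_def_gen by simp
  moreover have "finite B"
    using B(2) vec.finiteI_independent by blast
  ultimately consider "B = {}" | r where "B = {r}"
    by (metis card_0_eq card_1_singletonE le_Suc_eq le_zero_eq One_nat_def)
  then show ?thesis
  proof cases
    case 1
    then have "X = outer 0 0"
      using row_in_span by (simp add: outer_def vec_eq_iff row_def)
    then show ?thesis by (rule that)
  next
    case (2 r)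
    then have "\<exists>c. row i X = c *s r" for i
      using row_in_span[of i] vec.span_singleton by blast
    then obtain c where c: "\<And>i. row i X = c i *s r" by metis
    have "X$i$j = c i * r$j" for i j
      using arg_cong[OF c[of i], of "\<lambda>v. v$j"] by (simp add: row_def)
    then have "X = outer (\<chi> i. c i) (\<chi> j. cnj (r$j))"
      unfolding outer_def by (simp add: vec_eq_iff)
    then show ?thesis by (rule that)
  qed
qed

lemma rank_outer:
  fixes u :: "complex^'n" and w :: "complex^'m"
  assumes "u \<noteq> 0" "w \<noteq> 0"
  shows "rank (outer u w) = 1"
proof -
  let ?r = "\<chi> j. cnj (w$j)"
  have "row i (outer u w) = u$i *s ?r" for i
    unfolding outer_def row_def by (simp add: vec_eq_iff)
  then have "rows (outer u w) \<subseteq> vec.span {?r}"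
    unfolding rows_def vec.span_singleton by auto
  then have "vec.dim (rows (outer u w)) \<le> 1"
    using vec.dim_le_card[of "rows (outer u w)" "{?r}"] by simp
  moreover obtain i j where "u$i \<noteq> 0" "w$j \<noteq> 0"
    using assms by (auto simp: vec_eq_iff)
  then have "row i (outer u w) \<noteq> 0"
    by (auto simp: vec_eq_iff row_def outer_def)
  then have "vec.dim (rows (outer u w)) \<noteq> 0"
    unfolding vec.dim_eq_0 rows_def by blast
  ultimately show ?thesis
    unfolding row_rank_def_gen by linarith
qed

lemma rank_zero_matrix: "rank (0 :: complex^'m^'n) = 0"
  unfolding row_rank_def_gen rows_def row_def by (simp add: vec.dim_eq_0)

lemma rank_le_1_iff_outer: "rank X \<le> 1 \<longleftrightarrow> (\<exists>u w. X = outer u w)"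
  using rank_le_1_imp_outer rank_outer rank_zero_matrix
  by (metis le_numeral_extra(1,4) outer_eq_0_iff)

definition proportional :: "complex^'k \<Rightarrow> complex^'k \<Rightarrow> bool" where
  "proportional x y \<longleftrightarrow> (\<forall>i k. x$i * y$k = x$k * y$i)"

lemma proportional_commute: "proportional x y \<longleftrightarrow> proportional y x"
  unfolding proportional_def by (auto simp: mult.commute)

lemma proportional_iff: "proportional x y \<longleftrightarrow> y = 0 \<or> (\<exists>c. x = c *s y)"
proof
  assume xy: "proportional x y"
  show "y = 0 \<or> (\<exists>c. x = c *s y)"
  proof (cases "y = 0")
    case False
    then obtain k where k: "y$k \<noteq> 0" by (auto simp: vec_eq_iff)
    define c where "c = x$k / y$k"
    have "x$i = c * y$i" for i
    proof -
      have "x$i * y$k = x$k * y$i"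
        using xy unfolding proportional_def by blast
      with k show ?thesis unfolding c_def by (simp add: field_simps)
    qed
    then have "x = c *s y" unfolding vec_eq_iff vector_smult_component by blast
    then show ?thesis by blast
  qed simp
next
  show "y = 0 \<or> (\<exists>c. x = c *s y) \<Longrightarrow> proportional x y"
    unfolding proportional_def by (elim disjE exE) (simp_all add: mult_ac)
qed

lemma proportional_trans:
  assumes "proportional x y" "proportional y z" "y \<noteq> 0"
  shows "proportional x z"
proof -
  obtain c where "x = c *s y"
    using assms(1,3) unfolding proportional_iff by blast
  moreover have "z = 0 \<or> (\<exists>d. y = d *s z)"
    using assms(2) unfolding proportional_iff by blast
  ultimately show ?thesis
    unfolding proportional_iff by auto
qed

lemma proportional_scale_left:
  assumes "c \<noteq> 0"
  shows "proportional (c *s x) y \<longleftrightarrow> proportional x y"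
  using assms unfolding proportional_def by (simp add: mult.assoc)

lemma proportional_add_scale_left: "proportional (x + c *s y) y \<longleftrightarrow> proportional x y"
  unfolding proportional_def by (simp add: ring_distribs mult_ac)

lemma proportional_add_left: "proportional (x + y) y \<longleftrightarrow> proportional x y"
  using proportional_add_scale_left[of x 1 y] by simp

lemma eq_1_if_proportional_scale_add:
  assumes b: "\<not> proportional b f" and gbf: "proportional (g *s b + f) (b + f)"
  shows "g = 1"
proof (rule ccontr)
  assume "g \<noteq> 1"
  have "g *s b + f = (1 - g) *s f + g *s (b + f)"
    by (simp add: vec_eq_iff algebra_simps)
  then have "proportional ((1 - g) *s f) (b + f)"
    using gbf proportional_add_scale_left by metis
  moreover have "1 - g \<noteq> 0"
    using \<open>g \<noteq> 1\<close> by simp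
  ultimately have "proportional f (b + f)"
    using proportional_scale_left by blast
  then show False
    using b proportional_add_left proportional_commute by blast
qed

lemma proportional_if_rank_outer_add_outer:
  assumes "rank (outer u1 w1 + outer u2 w2) \<le> 1"
  shows "proportional u1 u2 \<or> proportional w1 w2"
proof (rule ccontr)
  assume "\<not> (proportional u1 u2 \<or> proportional w1 w2)"
  then obtain i k j l where ik: "u1$i * u2$k - u1$k * u2$i \<noteq> 0"
    and jl: "w1$j * w2$l - w1$l * w2$j \<noteq> 0"
    unfolding proportional_def by auto
  obtain u w where X: "outer u1 w1 + outer u2 w2 = outer u w"
    using assms rank_le_1_imp_outer by blast
  let ?X = "outer u w"
  have entries: "?X$a$b = u1$a * cnj (w1$b) + u2$a * cnj (w2$b)" for a b
    using X[symmetric] by (simp add: outer_def)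
  \<comment> \<open>The 2x2 minor in rows i, k and columns j, l of a rank-one matrix vanishes.\<close>
  have "0 = ?X$i$j * ?X$k$l - ?X$i$l * ?X$k$j"
    by (simp add: outer_def)
  also have "\<dots> = (u1$i * u2$k - u1$k * u2$i) * cnj (w1$j * w2$l - w1$l * w2$j)"
    unfolding entries complex_cnj_diff complex_cnj_mult by algebra
  finally show False
    using ik jl by (metis complex_cnj_zero_iff mult_eq_0_iff)
qed

definition conj_transpose :: "complex^'m^'n \<Rightarrow> complex^'n^'m" where
  "conj_transpose X = (\<chi> j i. cnj (X$i$j))"

lemma conj_transpose_outer [simp]: "conj_transpose (outer u w) = outer w u"
  unfolding conj_transpose_def outer_def by (simp add: vec_eq_iff)

lemma conj_transpose_add [simp]: "conj_transpose (X + Y) = conj_transpose X + conj_transpose Y"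
  unfolding conj_transpose_def by (simp add: vec_eq_iff)

lemma conj_transpose_conj_transpose [simp]: "conj_transpose (conj_transpose X) = X"
  unfolding conj_transpose_def by (simp add: vec_eq_iff)

lemma rank_conj_transpose_le_1:
  assumes "rank X \<le> 1"
  shows "rank (conj_transpose X) \<le> 1"
  using assms unfolding rank_le_1_iff_outer by (metis conj_transpose_outer)

lemma eq_outer_if_perturbations_rank_le_1:
  fixes G :: "complex^'m^'n"
  assumes e: "e \<noteq> 0" and f: "f \<noteq> 0"
    and a: "\<not> proportional a e" and b: "\<not> proportional b f"
    and G: "rank G \<le> 1"
    and Ge: "rank (G + outer e b) \<le> 1"
    and Gf: "rank (G + outer a f) \<le> 1"
    and Gef: "rank (G + outer e b + outer a f + outer e f) \<le> 1"
  shows "G = outer a b"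
proof -
  have not_rank_le_1: "\<not> rank (outer e (b + c *s f) + outer a f) \<le> 1" for c
    using proportional_if_rank_outer_add_outer a b
    by (metis proportional_add_scale_left proportional_commute)
  obtain u w where uw: "G = outer u w"
    using G rank_le_1_imp_outer by blast
  show ?thesis
  proof (cases "u = 0 \<or> w = 0")
    case True
    then have "G + outer e b + outer a f + outer e f = outer e (b + 1 *s f) + outer a f"
      using uw by (simp add: outer_add_right)
    then show ?thesis
      using Gef not_rank_le_1 by metis
  next
    case False
    then have u: "u \<noteq> 0" and w: "w \<noteq> 0" by auto
    have "proportional u e \<or> proportional w b"
      using Ge uw proportional_if_rank_outer_add_outer by blast
    moreover have "proportional u a \<or> proportional w f"
      using Gf uw proportional_if_rank_outer_add_outer by blast
    moreover have False if "proportional u e" "proportional u a"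
      using proportional_trans[of a u e] that u a by (simp add: proportional_commute)
    moreover have False if "proportional w b" "proportional w f"
      using proportional_trans[of b w f] that w b by (simp add: proportional_commute)
    moreover have False if ue: "proportional u e" and wf: "proportional w f"
    proof -
      obtain \<alpha> \<beta> where "u = \<alpha> *s e" "w = \<beta> *s f"
        using ue wf e f unfolding proportional_iff by blast
      then have "G + outer e b + outer a f + outer e f
          = outer e (b + (cnj \<alpha> * \<beta> + 1) *s f) + outer a f"
        unfolding uw outer_def by (simp add: vec_eq_iff algebra_simps)
      then show False
        using Gef not_rank_le_1 by metis
    qed
    moreover have "G = outer a b" if ua: "proportional u a" and wb: "proportional w b"
    proof -
      have a0: "a \<noteq> 0" and b0: "b \<noteq> 0"
        using a b by (auto simp: proportional_def)
      obtain \<alpha> \<beta> where "u = \<alpha> *s a" "w = \<beta> *s b"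
        using ua wb a0 b0 unfolding proportional_iff by blast
      define g where "g = cnj \<alpha> * \<beta>"
      have G_eq: "G = outer a (g *s b)"
        unfolding uw \<open>u = _\<close> \<open>w = _\<close> g_def outer_def by (simp add: vec_eq_iff mult_ac)
      have "G + outer e b + outer a f + outer e f = outer a (g *s b + f) + outer e (b + f)"
        unfolding G_eq outer_def by (simp add: vec_eq_iff algebra_simps)
      then have "proportional a e \<or> proportional (g *s b + f) (b + f)"
        using Gef proportional_if_rank_outer_add_outer by metis
      then have "g = 1"
        using a b eq_1_if_proportional_scale_add by blast
      then show ?thesis
        using G_eq by simp
    qed
    ultimately show ?thesis by blast
  qed
qed

lemma ex_outer_fixed_right_if_perturbations_rank_le_1:
  fixes H :: "complex^'m^'n"
  assumes e: "e \<noteq> 0" and f: "f \<noteq> 0" and c: "\<not> proportional c e"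
    and H: "rank H \<le> 1"
    and Ha: "rank (H + outer a f) \<le> 1"
    and Hc: "rank (H + outer c f) \<le> 1"
    and Hac: "rank (H + outer c f + outer a f + outer e f) \<le> 1"
  shows "\<exists>x. H = outer x f"
proof -
  obtain u w where uw: "H = outer u w"
    using H rank_le_1_imp_outer by blast
  show ?thesis
  proof (cases "u = 0 \<or> proportional w f")
    case True
    then obtain \<beta> where "u = 0 \<or> w = \<beta> *s f"
      using f unfolding proportional_iff by blast
    then have "H = outer (cnj \<beta> *s u) f \<or> H = outer 0 f"
      unfolding uw outer_def by (auto simp: vec_eq_iff mult_ac)
    then show ?thesis by blast
  next
    case False
    then have u: "u \<noteq> 0" and w_f: "\<not> proportional w f" by auto
    have "H + outer c f + outer a f + outer e f = outer u w + outer (c + a + e) f"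
      unfolding uw by (simp add: outer_add_left)
    then have "proportional (c + a + e) u"
      using Hac w_f proportional_if_rank_outer_add_outer proportional_commute by metis
    moreover have "proportional a u" "proportional c u"
      using Ha Hc uw w_f proportional_if_rank_outer_add_outer proportional_commute by blast+
    ultimately obtain \<alpha> \<gamma> \<delta> where "a = \<alpha> *s u" "c = \<gamma> *s u" "c + a + e = \<delta> *s u"
      using u unfolding proportional_iff by blast
    then have "e = (\<delta> - \<gamma> - \<alpha>) *s u"
      by (simp add: vec_eq_iff algebra_simps)
    then obtain k where "e = k *s u" by blast
    with \<open>c = _\<close> have "proportional c e"
      unfolding proportional_def by (simp add: mult_ac)
    with c show ?thesis by blast
  qed
qed

lemma ex_outer_fixed_left_if_perturbations_rank_le_1:
  fixes H :: "complex^'m^'n"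
  assumes e: "e \<noteq> 0" and f: "f \<noteq> 0" and d: "\<not> proportional d f"
    and H: "rank H \<le> 1"
    and Hb: "rank (H + outer e b) \<le> 1"
    and Hd: "rank (H + outer e d) \<le> 1"
    and Hbd: "rank (H + outer e d + outer e b + outer e f) \<le> 1"
  shows "\<exists>y. H = outer e y"
proof -
  have "rank (conj_transpose H + outer b e) \<le> 1"
    "rank (conj_transpose H + outer d e) \<le> 1"
    "rank (conj_transpose H + outer d e + outer b e + outer f e) \<le> 1"
    using rank_conj_transpose_le_1[OF Hb] rank_conj_transpose_le_1[OF Hd] rank_conj_transpose_le_1[OF Hbd]
    by simp_all
  then obtain y where "conj_transpose H = outer y e"
    using ex_outer_fixed_right_if_perturbations_rank_le_1[OF f e d] H rank_conj_transpose_le_1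
    by blast
  then have "H = outer e y"
    using conj_transpose_conj_transpose[of H] by simp
  then show ?thesis ..
qed

locale rank_one_preserving =
  fixes p :: "complex^'m^'n \<Rightarrow> complex^'m^'n \<Rightarrow> complex^'m^'n"
  assumes ropp: "ropp p"
begin

lemma add_left: "p (A + B) C = p A C + p B C"
  and add_right: "p A (B + C) = p A B + p A C"
  and scale_left: "p (mscale c A) B = mscale c (p A B)"
  and scale_right: "p A (mscale c B) = mscale c (p A B)"
  and assoc: "p (p A B) C = p A (p B C)"
  using ropp unfolding ropp_def mat_bilinear_def by blast+

lemma zero_left [simp]: "p 0 B = 0"
  using add_left[of 0 0 B] by simp

lemma zero_right [simp]: "p A 0 = 0"
  using add_right[of A 0 0] by simp

lemma rank_outer_outer_le_1: "rank (p (outer a b) (outer c d)) \<le> 1"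
proof (cases "a = 0 \<or> b = 0 \<or> c = 0 \<or> d = 0")
  case True
  then show ?thesis by (auto simp: rank_zero_matrix)
next
  case False
  then show ?thesis
    using ropp rank_outer[of a b] rank_outer[of c d] unfolding ropp_def by blast
qed

lemma unit_eq_outer:
  obtains e f where "e \<noteq> 0" "f \<noteq> 0" "\<And>A. p (outer e f) A = A" "\<And>A. p A (outer e f) = A"
proof -
  obtain E where E: "rank E = 1" "\<And>A. p E A = A \<and> p A E = A"
    using ropp unfolding ropp_def by blast
  moreover obtain e f where "E = outer e f"
    using E(1) rank_le_1_imp_outer[of E] by auto
  moreover have "E \<noteq> 0"
    using E(1) by (auto simp: rank_zero_matrix)
  ultimately show ?thesis
    using that by auto
qed

end

text \<open>Matrices outer a f are called columns and matrices outer e b rows.\<close>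

locale rank_one_preserving_unit = rank_one_preserving +
  fixes e :: "complex^'n" and f :: "complex^'m"
  assumes e_nonzero: "e \<noteq> 0" and f_nonzero: "f \<noteq> 0"
    and unit_left: "p (outer e f) A = A" and unit_right: "p A (outer e f) = A"
begin

lemmas expand =
  outer_add_left outer_add_right outer_scale_left outer_scale_right
  add_left add_right scale_left scale_right unit_left unit_right

lemma p_col_row: "p (outer a f) (outer e b) = outer a b"
proof (cases "proportional a e \<or> proportional b f")
  case True
  then obtain c where "a = c *s e \<or> b = c *s f"
    using e_nonzero f_nonzero unfolding proportional_iff by blast
  then show ?thesis by (auto simp: expand)
next
  case False
  let ?G = "p (outer a f) (outer e b)"
  have "rank (?G + outer e b) \<le> 1"
    using rank_outer_outer_le_1[of "a + e" f e b] by (simp add: expand)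
  moreover have "rank (?G + outer a f) \<le> 1"
    using rank_outer_outer_le_1[of a f e "b + f"] by (simp add: expand)
  moreover have "rank (?G + outer e b + outer a f + outer e f) \<le> 1"
    using rank_outer_outer_le_1[of "a + e" f e "b + f"] by (simp add: expand add_ac)
  ultimately show ?thesis
    using False eq_outer_if_perturbations_rank_le_1 e_nonzero f_nonzero rank_outer_outer_le_1
    by blast
qed

lemma p_row_col: "p (outer e b) (outer c f) = outer c b"
proof (cases "proportional c e \<or> proportional b f")
  case True
  then obtain \<gamma> where "c = \<gamma> *s e \<or> b = \<gamma> *s f"
    using e_nonzero f_nonzero unfolding proportional_iff by blast
  then show ?thesis by (auto simp: expand)
next
  case False
  let ?G = "p (outer e b) (outer c f)"
  have "rank (?G + outer e b) \<le> 1"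
    using rank_outer_outer_le_1[of e b "c + e" f] by (simp add: expand)
  moreover have "rank (?G + outer c f) \<le> 1"
    using rank_outer_outer_le_1[of e "b + f" c f] by (simp add: expand)
  moreover have "rank (?G + outer e b + outer c f + outer e f) \<le> 1"
    using rank_outer_outer_le_1[of e "b + f" "c + e" f] by (simp add: expand add_ac)
  ultimately show ?thesis
    using False eq_outer_if_perturbations_rank_le_1 e_nonzero f_nonzero rank_outer_outer_le_1
    by blast
qed

lemma ex_p_col_col: "\<exists>x. p (outer a f) (outer c f) = outer x f"
proof (cases "proportional c e")
  case True
  then obtain \<gamma> where "c = \<gamma> *s e"
    using e_nonzero unfolding proportional_iff by blast
  then have "p (outer a f) (outer c f) = outer (\<gamma> *s a) f"
    by (simp add: expand)
  then show ?thesis ..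
next
  case False
  let ?H = "p (outer a f) (outer c f)"
  have "rank (?H + outer a f) \<le> 1"
    using rank_outer_outer_le_1[of a f "c + e" f] by (simp add: expand)
  moreover have "rank (?H + outer c f) \<le> 1"
    using rank_outer_outer_le_1[of "a + e" f c f] by (simp add: expand)
  moreover have "rank (?H + outer c f + outer a f + outer e f) \<le> 1"
    using rank_outer_outer_le_1[of "a + e" f "c + e" f] by (simp add: expand add_ac)
  ultimately show ?thesis
    using False ex_outer_fixed_right_if_perturbations_rank_le_1 e_nonzero f_nonzero
      rank_outer_outer_le_1
    by blast
qed

lemma ex_p_row_row: "\<exists>y. p (outer e b) (outer e d) = outer e y"
proof (cases "proportional d f")
  case True
  then obtain \<delta> where "d = \<delta> *s f"
    using f_nonzero unfolding proportional_iff by blast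
  then have "p (outer e b) (outer e d) = outer e (\<delta> *s b)"
    by (simp add: expand)
  then show ?thesis ..
next
  case False
  let ?H = "p (outer e b) (outer e d)"
  have "rank (?H + outer e b) \<le> 1"
    using rank_outer_outer_le_1[of e b e "d + f"] by (simp add: expand)
  moreover have "rank (?H + outer e d) \<le> 1"
    using rank_outer_outer_le_1[of e "b + f" e d] by (simp add: expand)
  moreover have "rank (?H + outer e d + outer e b + outer e f) \<le> 1"
    using rank_outer_outer_le_1[of e "b + f" e "d + f"] by (simp add: expand add_ac)
  ultimately show ?thesis
    using False ex_outer_fixed_left_if_perturbations_rank_le_1 e_nonzero f_nonzero
      rank_outer_outer_le_1
    by blast
qed

definition col_mult :: "complex^'n \<Rightarrow> complex^'n \<Rightarrow> complex^'n" where
  "col_mult a c = (SOME x. p (outer a f) (outer c f) = outer x f)"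

definition row_mult :: "complex^'m \<Rightarrow> complex^'m \<Rightarrow> complex^'m" where
  "row_mult b d = (SOME y. p (outer e b) (outer e d) = outer e y)"

lemma p_col_col: "p (outer a f) (outer c f) = outer (col_mult a c) f"
  unfolding col_mult_def using someI_ex[OF ex_p_col_col] .

lemma p_row_row: "p (outer e b) (outer e d) = outer e (row_mult b d)"
  unfolding row_mult_def using someI_ex[OF ex_p_row_row] .

lemma p_outer_outer: "p (outer a b) (outer c d) = outer (col_mult a c) (row_mult b d)"
proof -
  have "p (outer a b) (outer c d) = p (p (outer a f) (outer e b)) (p (outer c f) (outer e d))"
    by (simp add: p_col_row)
  also have "\<dots> = p (outer a f) (p (p (outer e b) (outer c f)) (outer e d))"
    by (simp add: assoc)
  also have "\<dots> = p (outer a f) (p (p (outer c f) (outer e b)) (outer e d))"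
    by (simp add: p_col_row p_row_col)
  also have "\<dots> = p (p (outer a f) (outer c f)) (p (outer e b) (outer e d))"
    by (simp add: assoc)
  also have "\<dots> = outer (col_mult a c) (row_mult b d)"
    by (simp add: p_col_col p_row_row p_col_row)
  finally show ?thesis .
qed

lemma unital_algebra_col_mult: "unital_algebra col_mult"
  unfolding unital_algebra_def
proof (intro conjI allI)
  fix x y z :: "complex^'n" and c :: complex
  note col_mult = p_col_col[symmetric]
  show "col_mult (x + y) z = col_mult x z + col_mult y z"
    by (rule outer_cancel_left[OF _ f_nonzero]) (simp add: col_mult expand)
  show "col_mult x (y + z) = col_mult x y + col_mult x z"
    by (rule outer_cancel_left[OF _ f_nonzero]) (simp add: col_mult expand)
  show "col_mult (c *s x) y = c *s col_mult x y"
    by (rule outer_cancel_left[OF _ f_nonzero]) (simp add: col_mult expand)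
  show "col_mult x (c *s y) = c *s col_mult x y"
    by (rule outer_cancel_left[OF _ f_nonzero]) (simp add: col_mult expand)
  show "col_mult (col_mult x y) z = col_mult x (col_mult y z)"
    by (rule outer_cancel_left[OF _ f_nonzero]) (simp add: col_mult assoc)
next
  have "col_mult e x = x \<and> col_mult x e = x" for x
    using outer_cancel_left[OF _ f_nonzero] by (metis p_col_col unit_left unit_right)
  then show "\<exists>u. \<forall>x. col_mult u x = x \<and> col_mult x u = x" by blast
qed

lemma unital_algebra_row_mult: "unital_algebra row_mult"
  unfolding unital_algebra_def
proof (intro conjI allI)
  fix x y z :: "complex^'m" and c :: complex
  note row_mult = p_row_row[symmetric]
  show "row_mult (x + y) z = row_mult x z + row_mult y z"
    by (rule outer_cancel_right[OF _ e_nonzero]) (simp add: row_mult expand)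
  show "row_mult x (y + z) = row_mult x y + row_mult x z"
    by (rule outer_cancel_right[OF _ e_nonzero]) (simp add: row_mult expand)
  show "row_mult (c *s x) y = c *s row_mult x y"
    by (rule outer_cancel_right[OF _ e_nonzero]) (simp add: row_mult expand)
  show "row_mult x (c *s y) = c *s row_mult x y"
    by (rule outer_cancel_right[OF _ e_nonzero]) (simp add: row_mult expand)
  show "row_mult (row_mult x y) z = row_mult x (row_mult y z)"
    by (rule outer_cancel_right[OF _ e_nonzero]) (simp add: row_mult assoc)
next
  have "row_mult f x = x \<and> row_mult x f = x" for x
    using outer_cancel_right[OF _ e_nonzero] by (metis p_row_row unit_left unit_right)
  then show "\<exists>u. \<forall>x. row_mult u x = x \<and> row_mult x u = x" by blast
qed

end

theorem mainTheorem3: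
  fixes p :: "complex^'m^'n \<Rightarrow> complex^'m^'n \<Rightarrow> complex^'m^'n"
  assumes "ropp p"
  shows "\<exists>qa :: complex^'n \<Rightarrow> complex^'n \<Rightarrow> complex^'n.
         \<exists>qb :: complex^'m \<Rightarrow> complex^'m \<Rightarrow> complex^'m.
           unital_algebra qa \<and> unital_algebra qb \<and>
           (\<forall>a b c d. p (outer a b) (outer c d) = outer (qa a c) (qb b d))"
proof -
  interpret rank_one_preserving p
    using assms by unfold_locales
  obtain e f where "e \<noteq> 0" "f \<noteq> 0" "\<And>A. p (outer e f) A = A" "\<And>A. p A (outer e f) = A"
    using unit_eq_outer by blast
  then interpret rank_one_preserving_unit p e f
    by unfold_locales
  show ?thesis
    using unital_algebra_col_mult unital_algebra_row_mult p_outer_outer by blast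
qed

end
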